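(* Let $\alpha:U\to V$ be a surjective h-transmission between commutative supertropical monoids, with $M:=eU$, $N:=eV$, $\gamma:=\alpha^\nu$, and let $\alpha=\rho\circ\mu\circ\beta\circ\lambda$ be its canonical factorization, where $\lambda=\pi_{E(U,\mathfrak A)}:U\to\bar U:=U/E(U,\mathfrak A)$ with $\mathfrak A=\mathfrak A_\alpha$, $\beta=\pi_{F(\bar U,\gamma)}:\bar U\to W:=\bar U/F(\bar U,\gamma)$, $\mu=\pi_T:W\to\bar W:=W/T$ with $T$ a tangible MFCE-relation on $W$, and $\rho:\bar W\to V$ an isomorphism over $N$. (i) The factors $\lambda,\beta,\mu,\rho$ are h-transmissions. (ii) If $U$ is a semiring, then $\bar U,W,\bar W,V$ are semirings, and $\lambda,\beta,\mu,\rho$ are semiring homomorphisms.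
   Context: All monoids are commutative. A supertropical monoid is a monoid $(U,\cdot)$ with absorbing element $0$ and distinguished idempotent $e$ with $ex=0\Rightarrow x=0$, together with a total ordering on $M:=eU$, compatible with multiplication and with $0$ least, making $M$ a bipotent semiring (addition $=\max$). $\mathcal T(U):=U\setminus eU$. Define $x+y:=y$ if $ex<ey$, $x$ if $ex>ey$, $ex$ if $ex=ey$; $U$ is a semiring if this addition is associative and distributive. A transmission $\alpha:U\to V$ is a map with $\alpha(0)=0$, $\alpha(1)=1$, multiplicative, $\alpha(e_U)=e_V$, order-preserving on $eU$; $\alpha^\nu$ is its restriction $eU\to eV$; ghost kernel $\mathfrak A_\alpha:=\{x:\alpha(x)\in eV\}$. An h-transmission is a transmission such that $ex<ey$ and $\alpha(ex)=\alpha(ey)$ imply $\alpha(y)\in eV$. For a TE-relation $E$ (multiplicative, order compatible on $M$, $ex\sim_E0\Rightarrow x\sim_E0$), $U/E$ has the unique supertropical monoid structure making $\pi_E$ a transmission. $E(U,\mathfrak A)$ for an ideal $\mathfrak A\supseteq M$: $x\sim y$ iff $x=y$ or ($x,y\in\mathfrak A$, $ex=ey$); ghost ideal of the quotient identified with $M$. $F(U,\gamma)$ for surjective $\gamma:M\to N$: $x\sim y$ iff $x=y$, or $x,y\in M$ with $\gamma(x)=\gamma(y)$, or $\gamma(ex)=\gamma(ey)=0$; ghost ideal of the quotient identified with $N$. An MFCE-relation is a multiplicative equivalence relation with $x\sim y\Rightarrow ex=ey$; it is tangible if each ghost element is equivalent only to itself. An isomorphism over $N$ is one whose ghost part is $\mathrm{id}_N$.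 (By the paper, every surjective transmission has a unique such canonical factorization.) *)

theory Defs
  imports Main
begin

text \<open>Commutative supertropical monoids, represented by carrier sets.
  stm_e is the distinguished idempotent e, stm_le the total order on the ghost ideal eU.\<close>

record 'a stm =
  stm_carrier :: "'a set"
  stm_mul :: "'a \<Rightarrow> 'a \<Rightarrow> 'a"
  stm_one :: 'a
  stm_zero :: 'a
  stm_e :: 'a
  stm_le :: "'a \<Rightarrow> 'a \<Rightarrow> bool"

definition ghosts :: "('a, 'm) stm_scheme \<Rightarrow> 'a set" where
  "ghosts U = (\<lambda>x. stm_mul U (stm_e U) x) ` stm_carrier U"

definition stm_lt :: "('a, 'm) stm_scheme \<Rightarrow> 'a \<Rightarrow> 'a \<Rightarrow> bool" where
  "stm_lt U x y \<longleftrightarrow> stm_le U x y \<and> x \<noteq> y"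

definition supertropical_monoid :: "('a, 'm) stm_scheme \<Rightarrow> bool" where
  "supertropical_monoid U \<longleftrightarrow>
     (let C = stm_carrier U; mul = stm_mul U; e = stm_e U; M = ghosts U; le = stm_le U in
      stm_one U \<in> C \<and> stm_zero U \<in> C \<and> e \<in> C \<and>
      (\<forall>x\<in>C. \<forall>y\<in>C. mul x y \<in> C) \<and>
      (\<forall>x\<in>C. \<forall>y\<in>C. \<forall>z\<in>C. mul (mul x y) z = mul x (mul y z)) \<and>
      (\<forall>x\<in>C. \<forall>y\<in>C. mul x y = mul y x) \<and>
      (\<forall>x\<in>C. mul (stm_one U) x = x) \<and>
      (\<forall>x\<in>C. mul (stm_zero U) x = stm_zero U) \<and>
      mul e e = e \<and>
      (\<forall>x\<in>C. mul e x = stm_zero U \<longrightarrow> x = stm_zero U) \<and>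
      (\<forall>x\<in>M. le x x) \<and>
      (\<forall>x\<in>M. \<forall>y\<in>M. le x y \<and> le y x \<longrightarrow> x = y) \<and>
      (\<forall>x\<in>M. \<forall>y\<in>M. \<forall>z\<in>M. le x y \<and> le y z \<longrightarrow> le x z) \<and>
      (\<forall>x\<in>M. \<forall>y\<in>M. le x y \<or> le y x) \<and>
      (\<forall>x\<in>M. \<forall>y\<in>M. \<forall>z\<in>M. le x y \<longrightarrow> le (mul x z) (mul y z)) \<and>
      (\<forall>x\<in>M. le (stm_zero U) x))"

definition stm_add :: "('a, 'm) stm_scheme \<Rightarrow> 'a \<Rightarrow> 'a \<Rightarrow> 'a" where
  "stm_add U x y =
     (let ex = stm_mul U (stm_e U) x; ey = stm_mul U (stm_e U) y in
      if stm_lt U ex ey then y else if stm_lt U ey ex then x else ex)"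

definition is_semiring :: "('a, 'm) stm_scheme \<Rightarrow> bool" where
  "is_semiring U \<longleftrightarrow>
     (\<forall>x\<in>stm_carrier U. \<forall>y\<in>stm_carrier U. \<forall>z\<in>stm_carrier U.
        stm_add U (stm_add U x y) z = stm_add U x (stm_add U y z) \<and>
        stm_mul U x (stm_add U y z) = stm_add U (stm_mul U x y) (stm_mul U x z))"

definition transmission :: "('a, 'm) stm_scheme \<Rightarrow> ('b, 'n) stm_scheme \<Rightarrow> ('a \<Rightarrow> 'b) \<Rightarrow> bool" where
  "transmission U V f \<longleftrightarrow>
     (\<forall>x\<in>stm_carrier U. f x \<in> stm_carrier V) \<and>
     f (stm_zero U) = stm_zero V \<and> f (stm_one U) = stm_one V \<and>
     (\<forall>x\<in>stm_carrier U. \<forall>y\<in>stm_carrier U. f (stm_mul U x y) = stm_mul V (f x) (f y)) \<and>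
     f (stm_e U) = stm_e V \<and>
     (\<forall>x\<in>ghosts U. \<forall>y\<in>ghosts U. stm_le U x y \<longrightarrow> stm_le V (f x) (f y))"

definition h_transmission :: "('a, 'm) stm_scheme \<Rightarrow> ('b, 'n) stm_scheme \<Rightarrow> ('a \<Rightarrow> 'b) \<Rightarrow> bool" where
  "h_transmission U V f \<longleftrightarrow> transmission U V f \<and>
     (\<forall>x\<in>stm_carrier U. \<forall>y\<in>stm_carrier U.
        stm_lt U (stm_mul U (stm_e U) x) (stm_mul U (stm_e U) y) \<and>
        f (stm_mul U (stm_e U) x) = f (stm_mul U (stm_e U) y) \<longrightarrow> f y \<in> ghosts V)"

definition ghost_kernel :: "('a, 'm) stm_scheme \<Rightarrow> ('b, 'n) stm_scheme \<Rightarrow> ('a \<Rightarrow> 'b) \<Rightarrow> 'a set" where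
  "ghost_kernel U V f = {x \<in> stm_carrier U. f x \<in> ghosts V}"

text \<open>Bijective transmission (the inverse is then automatically a transmission).\<close>
definition stm_iso :: "('a, 'm) stm_scheme \<Rightarrow> ('b, 'n) stm_scheme \<Rightarrow> ('a \<Rightarrow> 'b) \<Rightarrow> bool" where
  "stm_iso U V f \<longleftrightarrow> transmission U V f \<and> bij_betw f (stm_carrier U) (stm_carrier V)"

definition semiring_hom :: "('a, 'm) stm_scheme \<Rightarrow> ('b, 'n) stm_scheme \<Rightarrow> ('a \<Rightarrow> 'b) \<Rightarrow> bool" where
  "semiring_hom U V f \<longleftrightarrow>
     (\<forall>x\<in>stm_carrier U. f x \<in> stm_carrier V) \<and>
     f (stm_zero U) = stm_zero V \<and> f (stm_one U) = stm_one V \<and>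
     (\<forall>x\<in>stm_carrier U. \<forall>y\<in>stm_carrier U.
        f (stm_mul U x y) = stm_mul V (f x) (f y) \<and> f (stm_add U x y) = stm_add V (f x) (f y))"

text \<open>Quotients by an equivalence relation r (assumed to be a TE-relation):
  equivalence classes, operations via representatives, and the induced order on ghosts
  (the unique one making the projection a transmission).\<close>

definition cls :: "('a, 'm) stm_scheme \<Rightarrow> ('a \<Rightarrow> 'a \<Rightarrow> bool) \<Rightarrow> 'a \<Rightarrow> 'a set" where
  "cls U r x = {y \<in> stm_carrier U. r x y}"

definition quot :: "('a, 'm) stm_scheme \<Rightarrow> ('a \<Rightarrow> 'a \<Rightarrow> bool) \<Rightarrow> 'a set stm" where
  "quot U r =
     \<lparr> stm_carrier = cls U r ` stm_carrier U,
       stm_mul = (\<lambda>X Y. cls U r (stm_mul U (SOME x. x \<in> X) (SOME y. y \<in> Y))),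
       stm_one = cls U r (stm_one U),
       stm_zero = cls U r (stm_zero U),
       stm_e = cls U r (stm_e U),
       stm_le = (\<lambda>X Y. \<exists>x\<in>X. \<exists>y\<in>Y. x \<in> ghosts U \<and> y \<in> ghosts U \<and> stm_le U x y) \<rparr>"

definition E_rel :: "('a, 'm) stm_scheme \<Rightarrow> 'a set \<Rightarrow> 'a \<Rightarrow> 'a \<Rightarrow> bool" where
  "E_rel U A x y \<longleftrightarrow> x = y \<or>
     (x \<in> A \<and> y \<in> A \<and> stm_mul U (stm_e U) x = stm_mul U (stm_e U) y)"

definition F_rel :: "('a, 'm) stm_scheme \<Rightarrow> ('b, 'n) stm_scheme \<Rightarrow> ('a \<Rightarrow> 'b) \<Rightarrow> 'a \<Rightarrow> 'a \<Rightarrow> bool" where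
  "F_rel U V \<gamma> x y \<longleftrightarrow> x = y \<or>
     (x \<in> ghosts U \<and> y \<in> ghosts U \<and> \<gamma> x = \<gamma> y) \<or>
     (\<gamma> (stm_mul U (stm_e U) x) = stm_zero V \<and> \<gamma> (stm_mul U (stm_e U) y) = stm_zero V)"

definition MFCE :: "('a, 'm) stm_scheme \<Rightarrow> ('a \<Rightarrow> 'a \<Rightarrow> bool) \<Rightarrow> bool" where
  "MFCE U r \<longleftrightarrow>
     (\<forall>x\<in>stm_carrier U. r x x) \<and>
     (\<forall>x\<in>stm_carrier U. \<forall>y\<in>stm_carrier U. r x y \<longrightarrow> r y x) \<and>
     (\<forall>x\<in>stm_carrier U. \<forall>y\<in>stm_carrier U. \<forall>z\<in>stm_carrier U. r x y \<and> r y z \<longrightarrow> r x z) \<and>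
     (\<forall>x\<in>stm_carrier U. \<forall>y\<in>stm_carrier U. \<forall>z\<in>stm_carrier U.
        r x y \<longrightarrow> r (stm_mul U x z) (stm_mul U y z)) \<and>
     (\<forall>x\<in>stm_carrier U. \<forall>y\<in>stm_carrier U.
        r x y \<longrightarrow> stm_mul U (stm_e U) x = stm_mul U (stm_e U) y)"

definition tangible_rel :: "('a, 'm) stm_scheme \<Rightarrow> ('a \<Rightarrow> 'a \<Rightarrow> bool) \<Rightarrow> bool" where
  "tangible_rel U r \<longleftrightarrow> (\<forall>x\<in>ghosts U. \<forall>y\<in>stm_carrier U. r x y \<longrightarrow> y = x)"

end

theory Submission
  imports Defs
begin

text \<open>
  Everything is pulled back to U. Each of Ubar, W, Wbar and V is the image of U under the
  composite \<lambda>, \<beta>\<lambda>, \<mu>\<beta>\<lambda>, \<alpha>, with the ghost order of the image being the image of the ghost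
  order of U; a map between two such images that commutes with the composites inherits from them
  multiplicativity, monotonicity on ghosts and additivity.

  The h-condition holds trivially for \<lambda>, \<mu> and \<rho>, which are injective on ghosts (E(U,\<AA>) is the
  identity on eU, T is tangible, \<rho> is bijective); for \<beta> it is inherited from \<alpha>, because \<lambda>
  reflects the ghost order. A composite p is additive as soon as it is an h-transmission and the
  ghost order of its target is antisymmetric: when ex < ey but p(ex) = p(ey), the h-condition
  makes p(y) ghost, so p(x + y) = p(y) = p(ex) = p(x) + p(y). Every composite is an
  h-transmission because it lies between \<lambda> and \<alpha>, and antisymmetry is pulled back from V along
  the ghost-injective \<rho> and \<mu>, and from U along the order-reflecting \<lambda>.
\<close>

abbreviation ghost_map :: "('a, 'm) stm_scheme \<Rightarrow> 'a \<Rightarrow> 'a" where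
  "ghost_map U x \<equiv> stm_mul U (stm_e U) x"

definition ghost_order_antisym :: "('a, 'm) stm_scheme \<Rightarrow> bool" where
  "ghost_order_antisym Y \<longleftrightarrow>
     (\<forall>g\<in>ghosts Y. \<forall>h\<in>ghosts Y. stm_le Y g h \<and> stm_le Y h g \<longrightarrow> g = h)"

locale supertropical =
  fixes U :: "('a, 'm) stm_scheme"
  assumes supertropical: "supertropical_monoid U"
begin

lemma one_closed: "stm_one U \<in> stm_carrier U"
  and zero_closed: "stm_zero U \<in> stm_carrier U"
  and e_closed: "stm_e U \<in> stm_carrier U"
  and e_idem: "stm_mul U (stm_e U) (stm_e U) = stm_e U"
  using supertropical by (simp_all add: supertropical_monoid_def Let_def)

lemma mul_closed: "x \<in> stm_carrier U \<Longrightarrow> y \<in> stm_carrier U \<Longrightarrow> stm_mul U x y \<in> stm_carrier U"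
  using supertropical[unfolded supertropical_monoid_def Let_def] by (elim conjE) blast

lemma mul_assoc: "x \<in> stm_carrier U \<Longrightarrow> y \<in> stm_carrier U \<Longrightarrow> z \<in> stm_carrier U \<Longrightarrow>
    stm_mul U (stm_mul U x y) z = stm_mul U x (stm_mul U y z)"
  using supertropical[unfolded supertropical_monoid_def Let_def] by (elim conjE) blast

lemma mul_commute: "x \<in> stm_carrier U \<Longrightarrow> y \<in> stm_carrier U \<Longrightarrow> stm_mul U x y = stm_mul U y x"
  using supertropical[unfolded supertropical_monoid_def Let_def] by (elim conjE) blast

lemma zero_mul: "x \<in> stm_carrier U \<Longrightarrow> stm_mul U (stm_zero U) x = stm_zero U"
  using supertropical[unfolded supertropical_monoid_def Let_def] by (elim conjE) blast

lemma le_refl: "g \<in> ghosts U \<Longrightarrow> stm_le U g g"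
  using supertropical[unfolded supertropical_monoid_def Let_def] by (elim conjE) blast

lemma le_antisym: "g \<in> ghosts U \<Longrightarrow> h \<in> ghosts U \<Longrightarrow> stm_le U g h \<Longrightarrow> stm_le U h g \<Longrightarrow> g = h"
  using supertropical[unfolded supertropical_monoid_def Let_def] by (elim conjE) blast

lemma le_total: "g \<in> ghosts U \<Longrightarrow> h \<in> ghosts U \<Longrightarrow> stm_le U g h \<or> stm_le U h g"
  using supertropical[unfolded supertropical_monoid_def Let_def] by (elim conjE) blast

lemma ghost_order_antisym: "ghost_order_antisym U"
  using le_antisym by (simp add: ghost_order_antisym_def)

lemma ghost_map_in_ghosts: "x \<in> stm_carrier U \<Longrightarrow> ghost_map U x \<in> ghosts U"
  by (simp add: ghosts_def)

lemma ghosts_subset_carrier: "ghosts U \<subseteq> stm_carrier U"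
  using mul_closed e_closed by (auto simp: ghosts_def)

lemma ghost_map_idem: "x \<in> stm_carrier U \<Longrightarrow> ghost_map U (ghost_map U x) = ghost_map U x"
  using mul_assoc[of "stm_e U" "stm_e U" x] e_idem e_closed by simp

lemma ghost_map_ghost: "g \<in> ghosts U \<Longrightarrow> ghost_map U g = g"
  using ghost_map_idem by (auto simp: ghosts_def)

lemma ghost_map_mul: "x \<in> stm_carrier U \<Longrightarrow> z \<in> stm_carrier U \<Longrightarrow>
    ghost_map U (stm_mul U x z) = stm_mul U (ghost_map U x) z"
  using mul_assoc e_closed by simp

lemma ghosts_mul_closed:
  assumes "g \<in> ghosts U" and "z \<in> stm_carrier U"
  shows "stm_mul U g z \<in> ghosts U"
proof -
  obtain x where "x \<in> stm_carrier U" and "g = ghost_map U x"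
    using assms(1) by (auto simp: ghosts_def)
  then show ?thesis
    using ghost_map_mul[of x z] ghost_map_in_ghosts mul_closed assms(2) by metis
qed

lemma add_closed: "x \<in> stm_carrier U \<Longrightarrow> y \<in> stm_carrier U \<Longrightarrow> stm_add U x y \<in> stm_carrier U"
  using mul_closed e_closed by (simp add: stm_add_def Let_def)

end

section \<open>Images of a supertropical monoid\<close>

text \<open>
  The quotients Ubar, W and Wbar are not known to be supertropical monoids (antisymmetry and
  transitivity of the induced order are not automatic), so they are handled as images of U, whose
  whole structure, ghost order included, is the image of that of U.
\<close>

definition stm_image :: "('a, 'm) stm_scheme \<Rightarrow> ('b, 'n) stm_scheme \<Rightarrow> ('a \<Rightarrow> 'b) \<Rightarrow> bool" where
  "stm_image U Y \<psi> \<longleftrightarrow>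
     stm_carrier Y = \<psi> ` stm_carrier U \<and>
     (\<forall>x\<in>stm_carrier U. \<forall>y\<in>stm_carrier U. \<psi> (stm_mul U x y) = stm_mul Y (\<psi> x) (\<psi> y)) \<and>
     \<psi> (stm_zero U) = stm_zero Y \<and> \<psi> (stm_one U) = stm_one Y \<and> \<psi> (stm_e U) = stm_e Y \<and>
     (\<forall>g\<in>ghosts U. \<forall>h\<in>ghosts U. stm_le U g h \<longrightarrow> stm_le Y (\<psi> g) (\<psi> h)) \<and>
     (\<forall>g\<in>ghosts U. \<forall>h\<in>ghosts U. stm_le Y (\<psi> g) (\<psi> h) \<longrightarrow>
        (\<exists>g'\<in>ghosts U. \<exists>h'\<in>ghosts U. \<psi> g' = \<psi> g \<and> \<psi> h' = \<psi> h \<and> stm_le U g' h'))"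

lemma (in supertropical) stm_image_self: "stm_image U U (\<lambda>x. x)"
  unfolding stm_image_def by auto

lemma (in supertropical) stm_image_if_surjective_transmission:
  assumes V: "supertropical_monoid V" and f: "transmission U V f"
    and surj: "f ` stm_carrier U = stm_carrier V"
  shows "stm_image U V f"
proof -
  interpret V: supertropical V by (rule supertropical.intro) (fact V)
  have f_mul: "\<And>x y. x \<in> stm_carrier U \<Longrightarrow> y \<in> stm_carrier U \<Longrightarrow> f (stm_mul U x y) = stm_mul V (f x) (f y)"
    and f_closed: "\<And>x. x \<in> stm_carrier U \<Longrightarrow> f x \<in> stm_carrier V"
    and f_mono: "\<And>g h. g \<in> ghosts U \<Longrightarrow> h \<in> ghosts U \<Longrightarrow> stm_le U g h \<Longrightarrow> stm_le V (f g) (f h)"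
    using f by (simp_all add: transmission_def)
  have f_ghosts: "f g \<in> ghosts V" if "g \<in> ghosts U" for g
    using that f_mul f_closed e_closed f by (auto simp: ghosts_def transmission_def)
  have "\<exists>g'\<in>ghosts U. \<exists>h'\<in>ghosts U. f g' = f g \<and> f h' = f h \<and> stm_le U g' h'"
    if g: "g \<in> ghosts U" and h: "h \<in> ghosts U" and le: "stm_le V (f g) (f h)" for g h
  proof (cases "stm_le U g h")
    case False
    then have "stm_le U h g" using le_total g h by blast
    then have "f g = f h" using V.le_antisym f_ghosts f_mono g h le by blast
    then show ?thesis using g le_refl by metis
  qed (use g h in blast)
  then show ?thesis
    using f surj by (auto simp: stm_image_def transmission_def)
qed

locale stm_image_of = supertropical U
  for U :: "('a, 'm) stm_scheme" +
  fixes Y :: "('b, 'n) stm_scheme" and \<psi> :: "'a \<Rightarrow> 'b"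
  assumes image: "stm_image U Y \<psi>"
begin

lemma carrier_image: "stm_carrier Y = \<psi> ` stm_carrier U"
  and map_mul: "x \<in> stm_carrier U \<Longrightarrow> y \<in> stm_carrier U \<Longrightarrow> \<psi> (stm_mul U x y) = stm_mul Y (\<psi> x) (\<psi> y)"
  and map_zero: "\<psi> (stm_zero U) = stm_zero Y"
  and map_one: "\<psi> (stm_one U) = stm_one Y"
  and map_e: "\<psi> (stm_e U) = stm_e Y"
  and map_mono: "g \<in> ghosts U \<Longrightarrow> h \<in> ghosts U \<Longrightarrow> stm_le U g h \<Longrightarrow> stm_le Y (\<psi> g) (\<psi> h)"
  using image by (simp_all add: stm_image_def)

lemma le_liftE:
  assumes "g \<in> ghosts U" and "h \<in> ghosts U" and "stm_le Y (\<psi> g) (\<psi> h)"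
  obtains g' h' where "g' \<in> ghosts U" and "h' \<in> ghosts U"
    and "\<psi> g' = \<psi> g" and "\<psi> h' = \<psi> h" and "stm_le U g' h'"
  using image assms unfolding stm_image_def by blast

lemma map_closed: "x \<in> stm_carrier U \<Longrightarrow> \<psi> x \<in> stm_carrier Y"
  by (simp add: carrier_image)

lemma map_ghost_map: "x \<in> stm_carrier U \<Longrightarrow> \<psi> (ghost_map U x) = ghost_map Y (\<psi> x)"
  using map_mul map_e e_closed by simp

lemma ghosts_image: "ghosts Y = \<psi> ` ghosts U"
  using map_ghost_map by (auto simp: ghosts_def carrier_image image_image)

lemma image_mul_closed: "X \<in> stm_carrier Y \<Longrightarrow> Z \<in> stm_carrier Y \<Longrightarrow> stm_mul Y X Z \<in> stm_carrier Y"
  and image_mul_commute: "X \<in> stm_carrier Y \<Longrightarrow> Z \<in> stm_carrier Y \<Longrightarrow> stm_mul Y X Z = stm_mul Y Z X"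
  by (auto simp: carrier_image map_mul[symmetric] mul_closed mul_commute)

lemma image_e_closed: "stm_e Y \<in> stm_carrier Y"
  using map_closed[OF e_closed] map_e by simp

lemma image_ghosts_subset_carrier: "ghosts Y \<subseteq> stm_carrier Y"
  using ghosts_image ghosts_subset_carrier map_closed by auto

lemma image_ghost_map_ghost:
  assumes "G \<in> ghosts Y"
  shows "ghost_map Y G = G"
proof -
  obtain g where "g \<in> ghosts U" and "G = \<psi> g"
    using assms ghosts_image by auto
  then show ?thesis
    using map_ghost_map[of g] ghost_map_ghost[of g] ghosts_subset_carrier by auto
qed

lemma transmission: "transmission U Y \<psi>"
  unfolding transmission_def using map_closed map_mul map_zero map_one map_e map_mono by blast

end

lemma (in supertropical) stm_image_of_if_image:
  fixes Y :: "('b, 'n) stm_scheme"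
  shows "stm_image U Y \<psi> \<Longrightarrow> stm_image_of U Y \<psi>"
  by (rule stm_image_of.intro[OF supertropical_axioms]) (simp add: stm_image_of_axioms_def)

section \<open>Quotients of images\<close>

definition mul_congruence :: "('a, 'm) stm_scheme \<Rightarrow> ('a \<Rightarrow> 'a \<Rightarrow> bool) \<Rightarrow> bool" where
  "mul_congruence Y r \<longleftrightarrow>
     (\<forall>x\<in>stm_carrier Y. r x x) \<and>
     (\<forall>x\<in>stm_carrier Y. \<forall>y\<in>stm_carrier Y. r x y \<longrightarrow> r y x) \<and>
     (\<forall>x\<in>stm_carrier Y. \<forall>y\<in>stm_carrier Y. \<forall>z\<in>stm_carrier Y. r x y \<and> r y z \<longrightarrow> r x z) \<and>
     (\<forall>x\<in>stm_carrier Y. \<forall>y\<in>stm_carrier Y. \<forall>z\<in>stm_carrier Y.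
        r x y \<longrightarrow> r (stm_mul Y x z) (stm_mul Y y z))"

lemma mul_congruence_if_MFCE: "MFCE Y r \<Longrightarrow> mul_congruence Y r"
  unfolding MFCE_def mul_congruence_def by blast

context
  fixes Y :: "('a, 'm) stm_scheme" and r :: "'a \<Rightarrow> 'a \<Rightarrow> bool"
  assumes r: "mul_congruence Y r"
begin

lemma cls_self: "x \<in> stm_carrier Y \<Longrightarrow> x \<in> cls Y r x"
  using r unfolding mul_congruence_def cls_def by blast

lemma cls_eq_iff:
  assumes x: "x \<in> stm_carrier Y" and y: "y \<in> stm_carrier Y"
  shows "cls Y r x = cls Y r y \<longleftrightarrow> r x y"
proof
  assume "cls Y r x = cls Y r y"
  then have "y \<in> cls Y r x"
    using cls_self[OF y] by simp
  then show "r x y"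
    by (simp add: cls_def)
next
  assume "r x y"
  then show "cls Y r x = cls Y r y"
    using r x y unfolding mul_congruence_def cls_def by blast
qed

lemma cls_memD:
  assumes "z \<in> cls Y r x" and "x \<in> stm_carrier Y"
  shows "z \<in> stm_carrier Y" and "cls Y r z = cls Y r x"
proof -
  show z: "z \<in> stm_carrier Y"
    using assms(1) by (simp add: cls_def)
  have "r z x"
    using assms r z unfolding cls_def mul_congruence_def by blast
  then show "cls Y r z = cls Y r x"
    using cls_eq_iff z assms(2) by blast
qed

lemma cls_some:
  assumes "x \<in> stm_carrier Y"
  shows "(SOME z. z \<in> cls Y r x) \<in> stm_carrier Y"
    and "cls Y r (SOME z. z \<in> cls Y r x) = cls Y r x"
  using cls_memD[OF someI[of "\<lambda>z. z \<in> cls Y r x", OF cls_self[OF assms]] assms] by auto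

end

context stm_image_of
begin

lemma quot_mul_cls:
  assumes r: "mul_congruence Y r" and X: "X \<in> stm_carrier Y" and Z: "Z \<in> stm_carrier Y"
  shows "stm_mul (quot Y r) (cls Y r X) (cls Y r Z) = cls Y r (stm_mul Y X Z)"
proof -
  define s where "s = (SOME z. z \<in> cls Y r X)"
  define t where "t = (SOME z. z \<in> cls Y r Z)"
  have s: "s \<in> stm_carrier Y" "r X s"
    using cls_some[OF r X] cls_eq_iff[OF r X, of s] unfolding s_def by auto
  have t: "t \<in> stm_carrier Y" "r Z t"
    using cls_some[OF r Z] cls_eq_iff[OF r Z, of t] unfolding t_def by auto
  have "r (stm_mul Y X Z) (stm_mul Y s Z)" and "r (stm_mul Y Z s) (stm_mul Y t s)"
    using r s t X Z unfolding mul_congruence_def by blast+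
  then have "r (stm_mul Y X Z) (stm_mul Y s t)"
    using r s t X Z image_mul_closed image_mul_commute unfolding mul_congruence_def by metis
  then have "cls Y r (stm_mul Y X Z) = cls Y r (stm_mul Y s t)"
    using cls_eq_iff[OF r] image_mul_closed s t X Z by blast
  then show ?thesis
    by (simp add: quot_def s_def t_def)
qed

lemma quot_image:
  assumes r: "mul_congruence Y r"
  shows "stm_image U (quot Y r) (\<lambda>x. cls Y r (\<psi> x))"
  unfolding stm_image_def
proof (intro conjI ballI impI)
  show "stm_carrier (quot Y r) = (\<lambda>x. cls Y r (\<psi> x)) ` stm_carrier U"
    by (simp add: quot_def carrier_image image_image)
next
  fix x y assume "x \<in> stm_carrier U" and "y \<in> stm_carrier U"
  then show "cls Y r (\<psi> (stm_mul U x y)) = stm_mul (quot Y r) (cls Y r (\<psi> x)) (cls Y r (\<psi> y))"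
    using map_mul map_closed quot_mul_cls[OF r] by simp
next
  fix g h assume g: "g \<in> ghosts U" and h: "h \<in> ghosts U" and le: "stm_le U g h"
  have "\<psi> g \<in> cls Y r (\<psi> g)" and "\<psi> h \<in> cls Y r (\<psi> h)"
    using cls_self[OF r] map_closed g h ghosts_subset_carrier by auto
  then show "stm_le (quot Y r) (cls Y r (\<psi> g)) (cls Y r (\<psi> h))"
    using map_mono[OF g h le] ghosts_image g h by (auto simp: quot_def)
next
  fix g h assume g: "g \<in> ghosts U" and h: "h \<in> ghosts U"
    and le: "stm_le (quot Y r) (cls Y r (\<psi> g)) (cls Y r (\<psi> h))"
  obtain P Q where P: "P \<in> cls Y r (\<psi> g)" "P \<in> ghosts Y" and Q: "Q \<in> cls Y r (\<psi> h)" "Q \<in> ghosts Y"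
    and PQ: "stm_le Y P Q"
    using le by (auto simp: quot_def)
  obtain a b where ab: "a \<in> ghosts U" "b \<in> ghosts U" "P = \<psi> a" "Q = \<psi> b"
    using P(2) Q(2) ghosts_image by auto
  obtain a' b' where "a' \<in> ghosts U" "b' \<in> ghosts U" "\<psi> a' = P" "\<psi> b' = Q" "stm_le U a' b'"
    using le_liftE[of a b] ab PQ by metis
  moreover have "cls Y r P = cls Y r (\<psi> g)" and "cls Y r Q = cls Y r (\<psi> h)"
    using cls_memD[OF r] P(1) Q(1) map_closed g h ghosts_subset_carrier by blast+
  ultimately show "\<exists>g'\<in>ghosts U. \<exists>h'\<in>ghosts U. cls Y r (\<psi> g') = cls Y r (\<psi> g) \<and>
      cls Y r (\<psi> h') = cls Y r (\<psi> h) \<and> stm_le U g' h'"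
    by blast
next
  show "cls Y r (\<psi> (stm_zero U)) = stm_zero (quot Y r)"
    by (simp add: quot_def map_zero)
next
  show "cls Y r (\<psi> (stm_one U)) = stm_one (quot Y r)"
    by (simp add: quot_def map_one)
next
  show "cls Y r (\<psi> (stm_e U)) = stm_e (quot Y r)"
    by (simp add: quot_def map_e)
qed

lemma mul_congruence_pullback:
  assumes R: "mul_congruence U R"
    and r_R: "\<And>x y. x \<in> stm_carrier U \<Longrightarrow> y \<in> stm_carrier U \<Longrightarrow> r (\<psi> x) (\<psi> y) \<longleftrightarrow> R x y"
  shows "mul_congruence Y r"
proof -
  have refl: "\<And>x. x \<in> stm_carrier U \<Longrightarrow> R x x"
    and sym: "\<And>x y. x \<in> stm_carrier U \<Longrightarrow> y \<in> stm_carrier U \<Longrightarrow> R x y \<Longrightarrow> R y x"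
    and trans: "\<And>x y z. x \<in> stm_carrier U \<Longrightarrow> y \<in> stm_carrier U \<Longrightarrow> z \<in> stm_carrier U \<Longrightarrow>
        R x y \<Longrightarrow> R y z \<Longrightarrow> R x z"
    and mul: "\<And>x y z. x \<in> stm_carrier U \<Longrightarrow> y \<in> stm_carrier U \<Longrightarrow> z \<in> stm_carrier U \<Longrightarrow>
        R x y \<Longrightarrow> R (stm_mul U x z) (stm_mul U y z)"
    using R unfolding mul_congruence_def by blast+
  show ?thesis
    unfolding mul_congruence_def carrier_image ball_simps
    by (simp add: r_R map_mul[symmetric] mul_closed) (use refl sym trans mul in blast)
qed

end

section \<open>Maps between images\<close>

definition stm_additive :: "('a, 'm) stm_scheme \<Rightarrow> ('b, 'n) stm_scheme \<Rightarrow> ('a \<Rightarrow> 'b) \<Rightarrow> bool" where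
  "stm_additive U Y f \<longleftrightarrow>
     (\<forall>x\<in>stm_carrier U. \<forall>y\<in>stm_carrier U. f (stm_add U x y) = stm_add Y (f x) (f y))"

lemma stm_add_unfold:
  "stm_add Y x y =
     (if stm_lt Y (ghost_map Y x) (ghost_map Y y) then y
      else if stm_lt Y (ghost_map Y y) (ghost_map Y x) then x else ghost_map Y x)"
  by (simp add: stm_add_def Let_def)

lemma h_transmission_if_inj_on_ghosts:
  assumes "transmission Y Z g" and "inj_on g (ghosts Y)"
  shows "h_transmission Y Z g"
  using assms unfolding h_transmission_def stm_lt_def inj_on_def by (auto simp: ghosts_def)

context stm_image_of
begin

lemma semiring_hom_if_additive: "stm_additive U Y \<psi> \<Longrightarrow> semiring_hom U Y \<psi>"
  using transmission by (simp add: semiring_hom_def transmission_def stm_additive_def)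

lemma transmission_factor:
  fixes Z :: "('c, 'k) stm_scheme"
  assumes p: "stm_image U Z p" and gp: "\<And>x. x \<in> stm_carrier U \<Longrightarrow> g (\<psi> x) = p x"
  shows "transmission Y Z g"
proof -
  interpret P: stm_image_of U Z p
    using stm_image_of_if_image[OF p] .
  have "stm_le Z (g X) (g X')"
    if X: "X \<in> ghosts Y" and X': "X' \<in> ghosts Y" and le: "stm_le Y X X'" for X X'
  proof -
    obtain a b where "a \<in> ghosts U" "b \<in> ghosts U" "X = \<psi> a" "X' = \<psi> b"
      using X X' ghosts_image by auto
    then obtain a' b' where ab': "a' \<in> ghosts U" "b' \<in> ghosts U" "\<psi> a' = X" "\<psi> b' = X'"
      and "stm_le U a' b'"
      using le_liftE[of a b] le by metis
    then have "stm_le Z (p a') (p b')"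
      using P.map_mono by blast
    moreover have "g X = p a'" and "g X' = p b'"
      using ab' gp ghosts_subset_carrier by auto
    ultimately show ?thesis
      by simp
  qed
  moreover have "g X \<in> stm_carrier Z" if "X \<in> stm_carrier Y" for X
    using that gp P.map_closed by (auto simp: carrier_image)
  moreover have "g (stm_mul Y X X') = stm_mul Z (g X) (g X')"
    if "X \<in> stm_carrier Y" and "X' \<in> stm_carrier Y" for X X'
    using that gp P.map_mul mul_closed by (auto simp: carrier_image map_mul[symmetric])
  moreover have "g (stm_zero Y) = stm_zero Z" and "g (stm_one Y) = stm_one Z" and "g (stm_e Y) = stm_e Z"
    using gp[OF zero_closed] gp[OF one_closed] gp[OF e_closed] map_zero map_one map_e
      P.map_zero P.map_one P.map_e by simp_all
  ultimately show ?thesis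
    unfolding transmission_def by blast
qed

lemma semiring_hom_factor:
  fixes Z :: "('c, 'k) stm_scheme"
  assumes p: "stm_image U Z p" and gp: "\<And>x. x \<in> stm_carrier U \<Longrightarrow> g (\<psi> x) = p x"
    and additive: "stm_additive U Y \<psi>" and p_additive: "stm_additive U Z p"
  shows "semiring_hom Y Z g"
proof -
  have "g (stm_add Y X X') = stm_add Z (g X) (g X')"
    if XX': "X \<in> stm_carrier Y" "X' \<in> stm_carrier Y" for X X'
  proof -
    obtain x x' where x: "x \<in> stm_carrier U" "x' \<in> stm_carrier U" and "X = \<psi> x" "X' = \<psi> x'"
      using XX' by (auto simp: carrier_image)
    then have "stm_add Y X X' = \<psi> (stm_add U x x')"
      using additive by (simp add: stm_additive_def)
    then have "g (stm_add Y X X') = p (stm_add U x x')"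
      using gp add_closed x by simp
    then show ?thesis
      using p_additive gp x \<open>X = \<psi> x\<close> \<open>X' = \<psi> x'\<close> by (simp add: stm_additive_def)
  qed
  then show ?thesis
    using transmission_factor[OF p gp] by (simp add: semiring_hom_def transmission_def)
qed

lemma is_semiring_image:
  assumes "is_semiring U" and additive: "stm_additive U Y \<psi>"
  shows "is_semiring Y"
  unfolding is_semiring_def
proof (intro ballI)
  fix X X' X'' assume "X \<in> stm_carrier Y" "X' \<in> stm_carrier Y" "X'' \<in> stm_carrier Y"
  then obtain x x' x'' where x: "x \<in> stm_carrier U" "x' \<in> stm_carrier U" "x'' \<in> stm_carrier U"
    and X: "X = \<psi> x" "X' = \<psi> x'" "X'' = \<psi> x''"
    by (auto simp: carrier_image)
  have "stm_add U (stm_add U x x') x'' = stm_add U x (stm_add U x' x'')"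
    and "stm_mul U x (stm_add U x' x'') = stm_add U (stm_mul U x x') (stm_mul U x x'')"
    using assms(1) x unfolding is_semiring_def by auto
  moreover have "stm_add Y (\<psi> u) (\<psi> v) = \<psi> (stm_add U u v)"
    if "u \<in> stm_carrier U" "v \<in> stm_carrier U" for u v
    using additive that by (simp add: stm_additive_def)
  ultimately show "stm_add Y (stm_add Y X X') X'' = stm_add Y X (stm_add Y X' X'') \<and>
      stm_mul Y X (stm_add Y X' X'') = stm_add Y (stm_mul Y X X') (stm_mul Y X X'')"
    using x by (simp add: X add_closed mul_closed map_mul[symmetric])
qed

lemma ghost_order_antisym_pullback:
  fixes Z :: "('c, 'k) stm_scheme"
  assumes g: "transmission Y Z g" and inj: "inj_on g (ghosts Y)" and anti: "ghost_order_antisym Z"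
  shows "ghost_order_antisym Y"
  unfolding ghost_order_antisym_def
proof (intro ballI impI)
  fix G H assume G: "G \<in> ghosts Y" and H: "H \<in> ghosts Y" and le: "stm_le Y G H \<and> stm_le Y H G"
  have g_ghosts: "g K \<in> ghosts Z" if "K \<in> ghosts Y" for K
    using that g image_e_closed by (auto simp: ghosts_def transmission_def)
  have "stm_le Z (g G) (g H)" and "stm_le Z (g H) (g G)"
    using g G H le unfolding transmission_def by blast+
  then have "g G = g H"
    using anti g_ghosts G H unfolding ghost_order_antisym_def by blast
  then show "G = H"
    using inj G H by (simp add: inj_on_def)
qed

lemma h_transmission_factor:
  fixes Z :: "('c, 'k) stm_scheme"
  assumes reflect: "\<And>a b. a \<in> ghosts U \<Longrightarrow> b \<in> ghosts U \<Longrightarrow> stm_le Y (\<psi> a) (\<psi> b) \<Longrightarrow> stm_le U a b"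
    and g: "transmission Y Z g" and p: "h_transmission U Z p"
    and gp: "\<And>x. x \<in> stm_carrier U \<Longrightarrow> g (\<psi> x) = p x"
  shows "h_transmission Y Z g"
  unfolding h_transmission_def
proof (intro conjI ballI impI)
  fix X X' assume "X \<in> stm_carrier Y" and "X' \<in> stm_carrier Y"
    and lt: "stm_lt Y (ghost_map Y X) (ghost_map Y X') \<and> g (ghost_map Y X) = g (ghost_map Y X')"
  then obtain x y where x: "x \<in> stm_carrier U" and y: "y \<in> stm_carrier U" and "X = \<psi> x" "X' = \<psi> y"
    by (auto simp: carrier_image)
  then have "stm_lt Y (\<psi> (ghost_map U x)) (\<psi> (ghost_map U y))"
    and "g (\<psi> (ghost_map U x)) = g (\<psi> (ghost_map U y))"
    using lt map_ghost_map by auto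
  then have "stm_lt U (ghost_map U x) (ghost_map U y)" and "p (ghost_map U x) = p (ghost_map U y)"
    using reflect[OF ghost_map_in_ghosts[OF x] ghost_map_in_ghosts[OF y]] gp mul_closed e_closed x y
    by (auto simp: stm_lt_def)
  then have "p y \<in> ghosts Z"
    using p x y unfolding h_transmission_def by blast
  then show "g X' \<in> ghosts Z"
    using gp y \<open>X' = \<psi> y\<close> by simp
qed (fact g)

lemma additive_if_h_transmission:
  assumes h: "h_transmission U Y \<psi>" and anti: "ghost_order_antisym Y"
  shows "stm_additive U Y \<psi>"
  unfolding stm_additive_def
proof (intro ballI)
  fix a b assume a: "a \<in> stm_carrier U" and b: "b \<in> stm_carrier U"
  define A where "A = \<psi> (ghost_map U a)"
  define B where "B = \<psi> (ghost_map U b)"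
  have AB: "A \<in> ghosts Y" "B \<in> ghosts Y"
    using a b ghosts_image ghost_map_in_ghosts by (auto simp: A_def B_def)
  have map_eq_ghost: "\<psi> y = \<psi> (ghost_map U y)"
    if "x \<in> stm_carrier U" "y \<in> stm_carrier U" "stm_lt U (ghost_map U x) (ghost_map U y)"
      "\<psi> (ghost_map U x) = \<psi> (ghost_map U y)" for x y
  proof -
    \<comment> \<open>the only case where the case distinctions defining + in U and in Y disagree\<close>
    have "\<psi> y \<in> ghosts Y"
      using h that unfolding h_transmission_def by blast
    then show ?thesis
      using image_ghost_map_ghost map_ghost_map that(2) by simp
  qed
  have rhs: "stm_add Y (\<psi> a) (\<psi> b) = (if stm_lt Y A B then \<psi> b else if stm_lt Y B A then \<psi> a else A)"
    unfolding stm_add_unfold[of Y] A_def B_def map_ghost_map[OF a] map_ghost_map[OF b] ..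
  consider (less) "stm_lt U (ghost_map U a) (ghost_map U b)"
    | (greater) "stm_lt U (ghost_map U b) (ghost_map U a)"
    | (equal) "ghost_map U a = ghost_map U b"
    using le_total[OF ghost_map_in_ghosts[OF a] ghost_map_in_ghosts[OF b]] unfolding stm_lt_def by fastforce
  then show "\<psi> (stm_add U a b) = stm_add Y (\<psi> a) (\<psi> b)"
  proof cases
    case less
    then have "stm_le Y A B"
      using map_mono a b ghost_map_in_ghosts by (simp add: A_def B_def stm_lt_def)
    moreover have "A = B \<Longrightarrow> \<psi> b = B"
      using map_eq_ghost[OF a b less] by (simp add: A_def B_def)
    ultimately show ?thesis
      using less rhs by (auto simp: stm_add_unfold[of U] stm_lt_def)
  next
    case greater
    then have not_less: "\<not> stm_lt U (ghost_map U a) (ghost_map U b)"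
      using le_antisym a b ghost_map_in_ghosts by (auto simp: stm_lt_def)
    have "stm_le Y B A"
      using greater map_mono a b ghost_map_in_ghosts by (simp add: A_def B_def stm_lt_def)
    moreover have "A = B \<Longrightarrow> \<psi> a = A"
      using map_eq_ghost[OF b a greater] by (simp add: A_def B_def)
    moreover have "\<not> (stm_le Y A B \<and> A \<noteq> B)" if "stm_le Y B A"
      using anti AB that unfolding ghost_order_antisym_def by blast
    ultimately show ?thesis
      using greater not_less rhs by (auto simp: stm_add_unfold[of U] stm_lt_def)
  next
    case equal
    then show ?thesis
      using rhs by (simp add: stm_add_unfold[of U] stm_lt_def A_def B_def)
  qed
qed

end

section \<open>The quotient by E(U, \<AA>)\<close>

definition stm_ideal :: "('a, 'm) stm_scheme \<Rightarrow> 'a set \<Rightarrow> bool" where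
  "stm_ideal U A \<longleftrightarrow> A \<subseteq> stm_carrier U \<and> (\<forall>a\<in>A. \<forall>x\<in>stm_carrier U. stm_mul U a x \<in> A)"

lemma (in supertropical) ghost_kernel_ideal:
  assumes V: "supertropical_monoid V" and f: "transmission U V f"
  shows "stm_ideal U (ghost_kernel U V f)" and "ghosts U \<subseteq> ghost_kernel U V f"
proof -
  interpret V: supertropical V
    by (rule supertropical.intro) (fact V)
  have f_mul: "\<And>x y. x \<in> stm_carrier U \<Longrightarrow> y \<in> stm_carrier U \<Longrightarrow> f (stm_mul U x y) = stm_mul V (f x) (f y)"
    and f_closed: "\<And>x. x \<in> stm_carrier U \<Longrightarrow> f x \<in> stm_carrier V"
    and f_e: "f (stm_e U) = stm_e V"
    using f by (simp_all add: transmission_def)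
  show "stm_ideal U (ghost_kernel U V f)"
    using f_mul f_closed mul_closed V.ghosts_mul_closed
    unfolding stm_ideal_def ghost_kernel_def by simp
  have "f (ghost_map U x) \<in> ghosts V" if "x \<in> stm_carrier U" for x
    using that f_mul f_closed f_e e_closed V.ghost_map_in_ghosts by simp
  then show "ghosts U \<subseteq> ghost_kernel U V f"
    using ghosts_subset_carrier unfolding ghost_kernel_def ghosts_def by auto
qed

locale E_quotient = supertropical U
  for U :: "('a, 'm) stm_scheme" +
  fixes A :: "'a set"
  assumes ideal: "stm_ideal U A" and ghosts_subset_ideal: "ghosts U \<subseteq> A"
begin

abbreviation Ubar :: "'a set stm" where
  "Ubar \<equiv> quot U (E_rel U A)"

abbreviation lam :: "'a \<Rightarrow> 'a set" where
  "lam \<equiv> cls U (E_rel U A)"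

lemma E_congruence: "mul_congruence U (E_rel U A)"
  unfolding mul_congruence_def
proof (intro conjI ballI impI)
  fix x y z assume "x \<in> stm_carrier U" "y \<in> stm_carrier U" "z \<in> stm_carrier U"
    and xy: "E_rel U A x y"
  then show "E_rel U A (stm_mul U x z) (stm_mul U y z)"
    using ideal ghost_map_mul by (auto simp: E_rel_def stm_ideal_def)
qed (auto simp: E_rel_def)

lemma E_image: "stm_image U Ubar lam"
  using stm_image_of.quot_image[OF stm_image_of_if_image[OF stm_image_self] E_congruence] by simp

end

sublocale E_quotient \<subseteq> Ubar: stm_image_of U Ubar lam
  by (rule stm_image_of.intro[OF supertropical_axioms stm_image_of_axioms.intro[OF E_image]])

context E_quotient
begin

lemma lam_eq_iff: "x \<in> stm_carrier U \<Longrightarrow> y \<in> stm_carrier U \<Longrightarrow> lam x = lam y \<longleftrightarrow> E_rel U A x y"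
  using cls_eq_iff[OF E_congruence] .

lemma lam_inj_on_ghosts: "inj_on lam (ghosts U)"
proof (rule inj_onI)
  fix g h assume g: "g \<in> ghosts U" and h: "h \<in> ghosts U" and "lam g = lam h"
  then have "E_rel U A g h"
    using lam_eq_iff ghosts_subset_carrier by blast
  then show "g = h"
    using ghost_map_ghost[OF g] ghost_map_ghost[OF h] by (auto simp: E_rel_def)
qed

lemma lam_ghost_map:
  assumes a: "a \<in> A"
  shows "lam a = lam (ghost_map U a)"
proof -
  have aC: "a \<in> stm_carrier U"
    using a ideal by (auto simp: stm_ideal_def)
  have "E_rel U A a (ghost_map U a)"
    using a aC ghosts_subset_ideal ghost_map_in_ghosts ghost_map_idem by (auto simp: E_rel_def)
  then show ?thesis
    using lam_eq_iff aC mul_closed e_closed by blast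
qed

lemma lam_in_ghosts_iff:
  assumes x: "x \<in> stm_carrier U"
  shows "lam x \<in> ghosts Ubar \<longleftrightarrow> x \<in> A"
proof
  assume "lam x \<in> ghosts Ubar"
  then obtain g where g: "g \<in> ghosts U" and "lam x = lam g"
    using Ubar.ghosts_image by auto
  then have "E_rel U A x g"
    using lam_eq_iff x ghosts_subset_carrier by blast
  then show "x \<in> A"
    using g ghosts_subset_ideal by (auto simp: E_rel_def)
next
  assume "x \<in> A"
  then show "lam x \<in> ghosts Ubar"
    using lam_ghost_map Ubar.ghosts_image ghost_map_in_ghosts x by auto
qed

lemma lam_le_reflect:
  assumes g: "g \<in> ghosts U" and h: "h \<in> ghosts U" and le: "stm_le Ubar (lam g) (lam h)"
  shows "stm_le U g h"
proof -
  obtain g' h' where "g' \<in> ghosts U" "h' \<in> ghosts U" "lam g' = lam g" "lam h' = lam h"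
    and le': "stm_le U g' h'"
    using Ubar.le_liftE[OF g h le] by metis
  then have "g' = g" and "h' = h"
    using lam_inj_on_ghosts g h unfolding inj_on_def by blast+
  then show ?thesis
    using le' by simp
qed

lemma lam_h_transmission: "h_transmission U Ubar lam"
  using h_transmission_if_inj_on_ghosts[OF Ubar.transmission lam_inj_on_ghosts] .

lemma Ubar_ghost_order_antisym: "ghost_order_antisym Ubar"
  unfolding ghost_order_antisym_def Ubar.ghosts_image
  using lam_le_reflect le_antisym by blast

lemma lam_additive: "stm_additive U Ubar lam"
  using Ubar.additive_if_h_transmission[OF lam_h_transmission Ubar_ghost_order_antisym] .

end

section \<open>The canonical factorization\<close>

locale surjective_h_transmission = supertropical U + V: supertropical V
  for U :: "('a, 'm) stm_scheme" and V :: "('b, 'n) stm_scheme" +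
  fixes \<alpha> :: "'a \<Rightarrow> 'b"
  assumes h_trans: "h_transmission U V \<alpha>" and surj: "\<alpha> ` stm_carrier U = stm_carrier V"
begin

lemma alpha_transmission: "transmission U V \<alpha>"
  using h_trans by (simp add: h_transmission_def)

lemma alpha_image: "stm_image U V \<alpha>"
  using stm_image_if_surjective_transmission[OF V.supertropical alpha_transmission surj] .

end

sublocale surjective_h_transmission \<subseteq> alpha: stm_image_of U V \<alpha>
  by (rule stm_image_of.intro[OF supertropical_axioms]) (simp add: stm_image_of_axioms_def alpha_image)

sublocale surjective_h_transmission \<subseteq> E_quotient U "ghost_kernel U V \<alpha>"
  by (rule E_quotient.intro[OF supertropical_axioms])
    (simp add: E_quotient_axioms_def ghost_kernel_ideal[OF V.supertropical alpha_transmission])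

context surjective_h_transmission
begin

abbreviation \<gamma> :: "'a set \<Rightarrow> 'b" where
  "\<gamma> \<equiv> \<lambda>X. \<alpha> (ghost_map U (SOME x. x \<in> X))"

abbreviation W :: "'a set set stm" where
  "W \<equiv> quot Ubar (F_rel Ubar V \<gamma>)"

abbreviation \<beta> :: "'a set \<Rightarrow> 'a set set" where
  "\<beta> \<equiv> cls Ubar (F_rel Ubar V \<gamma>)"

lemma \<gamma>_lam:
  assumes x: "x \<in> stm_carrier U"
  shows "\<gamma> (lam x) = \<alpha> (ghost_map U x)"
proof -
  define z where "z = (SOME z. z \<in> lam x)"
  have "z \<in> stm_carrier U" and "lam z = lam x"
    using cls_some[OF E_congruence x] unfolding z_def by auto
  then have "E_rel U (ghost_kernel U V \<alpha>) z x"
    using lam_eq_iff x by blast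
  then have "\<alpha> (ghost_map U z) = \<alpha> (ghost_map U x)"
    by (auto simp: E_rel_def)
  then show ?thesis
    by (simp add: z_def)
qed

lemma lam_in_ghosts_iff_alpha: "x \<in> stm_carrier U \<Longrightarrow> lam x \<in> ghosts Ubar \<longleftrightarrow> \<alpha> x \<in> ghosts V"
  using lam_in_ghosts_iff by (simp add: ghost_kernel_def)

definition F_pullback :: "'a \<Rightarrow> 'a \<Rightarrow> bool" where
  "F_pullback x y \<longleftrightarrow> x = y \<or>
     (\<alpha> x \<in> ghosts V \<and> \<alpha> y \<in> ghosts V \<and> \<alpha> (ghost_map U x) = \<alpha> (ghost_map U y)) \<or>
     (\<alpha> (ghost_map U x) = stm_zero V \<and> \<alpha> (ghost_map U y) = stm_zero V)"

lemma F_rel_lam_iff: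
  assumes x: "x \<in> stm_carrier U" and y: "y \<in> stm_carrier U"
  shows "F_rel Ubar V \<gamma> (lam x) (lam y) \<longleftrightarrow> F_pullback x y"
proof -
  have \<gamma>_ghost_map: "\<gamma> (ghost_map Ubar (lam u)) = \<alpha> (ghost_map U u)" if "u \<in> stm_carrier U" for u
    using that \<gamma>_lam[of "ghost_map U u"] ghost_map_idem mul_closed e_closed
    by (simp flip: Ubar.map_ghost_map)
  have "lam x = lam y \<longleftrightarrow>
      x = y \<or> (\<alpha> x \<in> ghosts V \<and> \<alpha> y \<in> ghosts V \<and> ghost_map U x = ghost_map U y)"
    using lam_eq_iff[OF x y] x y by (auto simp: E_rel_def ghost_kernel_def)
  then show ?thesis
    unfolding F_rel_def F_pullback_def
    using \<gamma>_ghost_map[OF x] \<gamma>_ghost_map[OF y] \<gamma>_lam[OF x] \<gamma>_lam[OF y]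
      lam_in_ghosts_iff_alpha[OF x] lam_in_ghosts_iff_alpha[OF y]
    by auto
qed

lemma F_pullback_congruence: "mul_congruence U F_pullback"
  unfolding mul_congruence_def
proof (intro conjI ballI impI)
  fix x y z assume x: "x \<in> stm_carrier U" and y: "y \<in> stm_carrier U" and z: "z \<in> stm_carrier U"
    and xy: "F_pullback x y"
  have "\<alpha> (ghost_map U (stm_mul U u z)) = stm_mul V (\<alpha> (ghost_map U u)) (\<alpha> z)"
    and "\<alpha> (stm_mul U u z) = stm_mul V (\<alpha> u) (\<alpha> z)" if "u \<in> stm_carrier U" for u
    using that z ghost_map_mul alpha.map_mul mul_closed e_closed by simp_all
  then show "F_pullback (stm_mul U x z) (stm_mul U y z)"
    using xy x y z V.ghosts_mul_closed V.zero_mul alpha.map_closed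
    unfolding F_pullback_def by auto
qed (auto simp: F_pullback_def)

lemma F_congruence: "mul_congruence Ubar (F_rel Ubar V \<gamma>)"
  using Ubar.mul_congruence_pullback[OF F_pullback_congruence F_rel_lam_iff] .

lemma W_image: "stm_image U W (\<lambda>x. \<beta> (lam x))"
  using Ubar.quot_image[OF F_congruence] .

lemma composite_h_transmission:
  fixes Y :: "('c, 'k) stm_scheme"
  assumes p: "stm_image U Y p"
    and lam_p: "\<And>x y. x \<in> stm_carrier U \<Longrightarrow> y \<in> stm_carrier U \<Longrightarrow> lam x = lam y \<Longrightarrow> p x = p y"
    and p_alpha: "\<And>x y. x \<in> stm_carrier U \<Longrightarrow> y \<in> stm_carrier U \<Longrightarrow> p x = p y \<Longrightarrow> \<alpha> x = \<alpha> y"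
  shows "h_transmission U Y p"
  unfolding h_transmission_def
proof (intro conjI ballI impI)
  interpret P: stm_image_of U Y p
    using stm_image_of_if_image[OF p] .
  show "transmission U Y p"
    by (rule P.transmission)
  fix x y assume x: "x \<in> stm_carrier U" and y: "y \<in> stm_carrier U"
    and lt: "stm_lt U (ghost_map U x) (ghost_map U y) \<and> p (ghost_map U x) = p (ghost_map U y)"
  then have "\<alpha> (ghost_map U x) = \<alpha> (ghost_map U y)"
    using p_alpha mul_closed e_closed by blast
  then have "y \<in> ghost_kernel U V \<alpha>"
    using h_trans x y lt unfolding h_transmission_def ghost_kernel_def by blast
  then have "p y = p (ghost_map U y)"
    using lam_p lam_ghost_map y mul_closed e_closed by blast
  then show "p y \<in> ghosts Y"
    using P.ghosts_image ghost_map_in_ghosts[OF y] by simp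
qed

end

sublocale surjective_h_transmission \<subseteq> W: stm_image_of U W "\<lambda>x. \<beta> (lam x)"
  using stm_image_of_if_image[OF W_image] .

locale canonical_factorization = surjective_h_transmission U V \<alpha>
  for U :: "('a, 'm) stm_scheme" and V :: "('b, 'n) stm_scheme" and \<alpha> +
  fixes T :: "'a set set \<Rightarrow> 'a set set \<Rightarrow> bool" and \<rho> :: "'a set set set \<Rightarrow> 'b"
  assumes T_MFCE: "MFCE W T" and T_tangible: "tangible_rel W T"
    and \<rho>_iso: "stm_iso (quot W T) V \<rho>"
    and factorization: "\<And>x. x \<in> stm_carrier U \<Longrightarrow> \<alpha> x = \<rho> (cls W T (\<beta> (lam x)))"
begin

abbreviation Wbar :: "'a set set set stm" where
  "Wbar \<equiv> quot W T"

abbreviation \<mu> :: "'a set set \<Rightarrow> 'a set set set" where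
  "\<mu> \<equiv> cls W T"

lemma Wbar_image: "stm_image U Wbar (\<lambda>x. \<mu> (\<beta> (lam x)))"
  using W.quot_image[OF mul_congruence_if_MFCE[OF T_MFCE]] .

end

sublocale canonical_factorization \<subseteq> Wbar: stm_image_of U Wbar "\<lambda>x. \<mu> (\<beta> (lam x))"
  using stm_image_of_if_image[OF Wbar_image] .

context canonical_factorization
begin

lemma \<mu>_inj_on_ghosts: "inj_on \<mu> (ghosts W)"
proof (rule inj_onI)
  fix X Y assume X: "X \<in> ghosts W" and Y: "Y \<in> ghosts W" and "\<mu> X = \<mu> Y"
  then have "T X Y"
    using cls_eq_iff[OF mul_congruence_if_MFCE[OF T_MFCE]] W.image_ghosts_subset_carrier by blast
  then show "X = Y"
    using T_tangible X Y W.image_ghosts_subset_carrier unfolding tangible_rel_def by blast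
qed

lemma \<rho>_transmission: "transmission Wbar V \<rho>"
  using \<rho>_iso by (simp add: stm_iso_def)

lemma \<rho>_inj_on_ghosts: "inj_on \<rho> (ghosts Wbar)"
  using \<rho>_iso Wbar.image_ghosts_subset_carrier by (auto simp: stm_iso_def bij_betw_def intro: inj_on_subset)

lemma \<beta>_transmission: "transmission Ubar W \<beta>"
  using Ubar.transmission_factor[OF W_image] by simp

lemma \<mu>_transmission: "transmission W Wbar \<mu>"
  using W.transmission_factor[OF Wbar_image] by simp

lemma Wbar_ghost_order_antisym: "ghost_order_antisym Wbar"
  using Wbar.ghost_order_antisym_pullback[OF \<rho>_transmission \<rho>_inj_on_ghosts V.ghost_order_antisym] .

lemma W_ghost_order_antisym: "ghost_order_antisym W"
  using W.ghost_order_antisym_pullback[OF \<mu>_transmission \<mu>_inj_on_ghosts Wbar_ghost_order_antisym] .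

lemma \<beta>_lam_h_transmission: "h_transmission U W (\<lambda>x. \<beta> (lam x))"
  by (rule composite_h_transmission[OF W_image]) (simp_all add: factorization)

lemma \<mu>_\<beta>_lam_h_transmission: "h_transmission U Wbar (\<lambda>x. \<mu> (\<beta> (lam x)))"
  by (rule composite_h_transmission[OF Wbar_image]) (simp_all add: factorization)

lemma factors_h_transmission:
  "h_transmission U Ubar lam" "h_transmission Ubar W \<beta>"
  "h_transmission W Wbar \<mu>" "h_transmission Wbar V \<rho>"
  using lam_h_transmission
    Ubar.h_transmission_factor[OF lam_le_reflect \<beta>_transmission \<beta>_lam_h_transmission]
    h_transmission_if_inj_on_ghosts[OF \<mu>_transmission \<mu>_inj_on_ghosts]
    h_transmission_if_inj_on_ghosts[OF \<rho>_transmission \<rho>_inj_on_ghosts]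
  by simp_all

lemma factors_semiring:
  assumes S: "is_semiring U"
  shows "is_semiring Ubar" "is_semiring W" "is_semiring Wbar" "is_semiring V"
    and "semiring_hom U Ubar lam" "semiring_hom Ubar W \<beta>"
    and "semiring_hom W Wbar \<mu>" "semiring_hom Wbar V \<rho>"
proof -
  have W_additive: "stm_additive U W (\<lambda>x. \<beta> (lam x))"
    using W.additive_if_h_transmission[OF \<beta>_lam_h_transmission W_ghost_order_antisym] .
  have Wbar_additive: "stm_additive U Wbar (\<lambda>x. \<mu> (\<beta> (lam x)))"
    using Wbar.additive_if_h_transmission[OF \<mu>_\<beta>_lam_h_transmission Wbar_ghost_order_antisym] .
  have V_additive: "stm_additive U V \<alpha>"
    using alpha.additive_if_h_transmission[OF h_trans V.ghost_order_antisym] .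
  show "is_semiring Ubar" "is_semiring W" "is_semiring Wbar" "is_semiring V"
    using Ubar.is_semiring_image[OF S lam_additive] W.is_semiring_image[OF S W_additive]
      Wbar.is_semiring_image[OF S Wbar_additive] alpha.is_semiring_image[OF S V_additive] .
  show "semiring_hom U Ubar lam"
    using Ubar.semiring_hom_if_additive[OF lam_additive] .
  show "semiring_hom Ubar W \<beta>"
    using Ubar.semiring_hom_factor[OF W_image _ lam_additive W_additive] by simp
  show "semiring_hom W Wbar \<mu>"
    using W.semiring_hom_factor[OF Wbar_image _ W_additive Wbar_additive] by simp
  show "semiring_hom Wbar V \<rho>"
    using Wbar.semiring_hom_factor[OF alpha_image _ Wbar_additive V_additive] factorization by simp
qed

end

theorem theorem5p11:
  fixes U :: "'a stm" and V :: "'b stm" and \<alpha> :: "'a \<Rightarrow> 'b"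
    and T :: "'a set set \<Rightarrow> 'a set set \<Rightarrow> bool" and \<rho> :: "'a set set set \<Rightarrow> 'b"
  assumes U: "supertropical_monoid U" and V: "supertropical_monoid V"
    and h: "h_transmission U V \<alpha>" and surj: "\<alpha> ` stm_carrier U = stm_carrier V"
  defines "\<AA> \<equiv> ghost_kernel U V \<alpha>"
  defines "Ubar \<equiv> quot U (E_rel U \<AA>)" and "lam \<equiv> cls U (E_rel U \<AA>)"
  defines "\<gamma> \<equiv> (\<lambda>X. \<alpha> (stm_mul U (stm_e U) (SOME x. x \<in> X)))"
  defines "W \<equiv> quot Ubar (F_rel Ubar V \<gamma>)" and "\<beta> \<equiv> cls Ubar (F_rel Ubar V \<gamma>)"
  defines "Wbar \<equiv> quot W T" and "\<mu> \<equiv> cls W T"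
  assumes T: "MFCE W T" "tangible_rel W T"
    and \<rho>: "stm_iso Wbar V \<rho>"
    and fact: "\<forall>x\<in>stm_carrier U. \<alpha> x = \<rho> (\<mu> (\<beta> (lam x)))"
  shows "(h_transmission U Ubar lam \<and> h_transmission Ubar W \<beta> \<and>
          h_transmission W Wbar \<mu> \<and> h_transmission Wbar V \<rho>) \<and>
         (is_semiring U \<longrightarrow>
            is_semiring Ubar \<and> is_semiring W \<and> is_semiring Wbar \<and> is_semiring V \<and>
            semiring_hom U Ubar lam \<and> semiring_hom Ubar W \<beta> \<and>
            semiring_hom W Wbar \<mu> \<and> semiring_hom Wbar V \<rho>)"
proof -
  have cf: "canonical_factorization U V \<alpha> T \<rho>"
    using U V h surj T \<rho> fact
    unfolding canonical_factorization_def canonical_factorization_axioms_def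
      surjective_h_transmission_def surjective_h_transmission_axioms_def supertropical_def
      \<AA>_def Ubar_def lam_def \<gamma>_def W_def \<beta>_def Wbar_def \<mu>_def
    by blast
  show ?thesis
    using canonical_factorization.factors_h_transmission[OF cf]
      canonical_factorization.factors_semiring[OF cf]
    unfolding \<AA>_def Ubar_def lam_def \<gamma>_def W_def \<beta>_def Wbar_def \<mu>_def
    by simp
qed

end
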